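(* Assume $f$ is Lipschitz, convex, and satisfies $\mathbf{(AP)_b}$ with $\lambda_1<b<B$. For $z\in Z$ and $t\in\mathbb{R}$ write $u(z,t)=\Psi^{-1}(z+t\phi_1)=w(z,t)+t\phi_1$ with $w(z,t)\in W$. Then for every $z\in Z$, $$\lim_{|t|\to\infty}\Big\|\frac{w(z,t)}{t}\Big\|_X=\lim_{|t|\to\infty}\Big\|\frac{u(z,t)}{t}-\phi_1\Big\|_X=0.$$
   Context: Let $\Omega\subset\mathbb{R}^n$ be a bounded domain with $C^{1,1}$ boundary. Let $Lu=\mathrm{tr}(A(x)D^2u)+b(x)\cdot\nabla u+c(x)u$, where $A\in C(\overline\Omega)$ is symmetric-matrix valued with eigenvalues in $[\lambda,\Lambda]$, $\Lambda\ge\lambda>0$, and $|b|,|c|\le\Lambda$. Fix $p\ge n$, $X=\{u\in W^{2,p}(\Omega):u=0\text{ on }\partial\Omega\}$, $Y=L^p(\Omega)$. $\lambda_1=\sup\{\mu:\exists\,\phi\in W^{2,n}_{\rm loc}(\Omega),\phi>0,(L+\mu)\phi\le0\}$ is the principal (simple) Dirichlet eigenvalue of $-L$ with eigenfunction $\phi_1\in X$, $\phi_1>0$; the adjoint $L^*$ has the same principal eigenvalue with positive eigenfunction $\phi_1^*$. $Z=\{g\in Y:\int_\Omega g\phi_1^*=0\}$, $W=Z\cap X$; $P:Y=Z\oplus\mathbb{R}\phi_1\to Z$, $P(z+s\phi_1)=z$. $F(u)=-Lu-f(u)$. Condition $\mathbf{(AP)_b}$ (lower slope normalized to $a=0$,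 so $0<\lambda_1<b$): $0\le\frac{f(x)-f(y)}{x-y}\le b$ for $x\ne y$, and for some $M\ge0$, $f(s)\ge\max\{bs-M,-M\}$ for all $s$. $B=B(L,\Omega)>\lambda_1$ is a constant (depending only on $L,\Omega$) for which, whenever $\lambda_1<b<B$, the map $\Psi:X\to Y$, $\Psi(w+t\phi_1)=PF(w+t\phi_1)+t\phi_1$ ($w\in W$, $t\in\mathbb{R}$), is a bi-Lipschitz homeomorphism. *)

theory Defs
  imports "HOL-Analysis.Analysis"
begin

definition pdv :: "(real^'n \<Rightarrow> real) \<Rightarrow> 'n \<Rightarrow> real^'n \<Rightarrow> real" where
  "pdv \<phi> i = (\<lambda>x. frechet_derivative \<phi> (at x) (axis i 1))"

definition smooth_fun :: "(real^'n \<Rightarrow> real) \<Rightarrow> bool" where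
  "smooth_fun \<phi> \<longleftrightarrow> (\<forall>ks::'n list. \<forall>x. (foldr (\<lambda>i g. pdv g i) ks \<phi>) differentiable (at x))"

definition test_fun :: "(real^'n) set \<Rightarrow> (real^'n \<Rightarrow> real) \<Rightarrow> bool" where
  "test_fun \<Omega> \<phi> \<longleftrightarrow> smooth_fun \<phi> \<and> compact (closure {x. \<phi> x \<noteq> 0})
      \<and> closure {x. \<phi> x \<noteq> 0} \<subseteq> \<Omega>"

definition is_wpd :: "(real^'n) set \<Rightarrow> (real^'n \<Rightarrow> real) \<Rightarrow> 'n \<Rightarrow> (real^'n \<Rightarrow> real) \<Rightarrow> bool" where
  "is_wpd \<Omega> u i g \<longleftrightarrow> (\<forall>\<phi>. test_fun \<Omega> \<phi> \<longrightarrow>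
      integrable (lebesgue_on \<Omega>) (\<lambda>x. u x * pdv \<phi> i x)
    \<and> integrable (lebesgue_on \<Omega>) (\<lambda>x. g x * \<phi> x)
    \<and> (\<integral>x. u x * pdv \<phi> i x \<partial>lebesgue_on \<Omega>) = - (\<integral>x. g x * \<phi> x \<partial>lebesgue_on \<Omega>))"

definition wgh :: "(real^'n) set \<Rightarrow> (real^'n \<Rightarrow> real) \<Rightarrow> ('n \<Rightarrow> real^'n \<Rightarrow> real)
    \<Rightarrow> ('n \<Rightarrow> 'n \<Rightarrow> real^'n \<Rightarrow> real) \<Rightarrow> bool" where
  "wgh \<Omega> u g h \<longleftrightarrow> (\<forall>i. is_wpd \<Omega> u i (g i)) \<and> (\<forall>i j. is_wpd \<Omega> (g i) j (h i j))"

definition wgrad :: "(real^'n) set \<Rightarrow> (real^'n \<Rightarrow> real) \<Rightarrow> 'n \<Rightarrow> real^'n \<Rightarrow> real" where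
  "wgrad \<Omega> u = fst (SOME gh. wgh \<Omega> u (fst gh) (snd gh))"

definition whess :: "(real^'n) set \<Rightarrow> (real^'n \<Rightarrow> real) \<Rightarrow> 'n \<Rightarrow> 'n \<Rightarrow> real^'n \<Rightarrow> real" where
  "whess \<Omega> u = snd (SOME gh. wgh \<Omega> u (fst gh) (snd gh))"

definition Lp :: "real \<Rightarrow> (real^'n) set \<Rightarrow> (real^'n \<Rightarrow> real) \<Rightarrow> bool" where
  "Lp p S u \<longleftrightarrow> u \<in> borel_measurable (lebesgue_on S)
      \<and> integrable (lebesgue_on S) (\<lambda>x. \<bar>u x\<bar> powr p)"

definition Lp_norm :: "real \<Rightarrow> (real^'n) set \<Rightarrow> (real^'n \<Rightarrow> real) \<Rightarrow> real" where
  "Lp_norm p S u = (\<integral>x. \<bar>u x\<bar> powr p \<partial>lebesgue_on S) powr (1 / p)"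

definition W2p :: "real \<Rightarrow> (real^'n) set \<Rightarrow> (real^'n \<Rightarrow> real) \<Rightarrow> bool" where
  "W2p p \<Omega> u \<longleftrightarrow> Lp p \<Omega> u \<and> (\<exists>g h. wgh \<Omega> u g h \<and> (\<forall>i. Lp p \<Omega> (g i)) \<and> (\<forall>i j. Lp p \<Omega> (h i j)))"

definition W2p_loc :: "real \<Rightarrow> (real^'n) set \<Rightarrow> (real^'n \<Rightarrow> real) \<Rightarrow> bool" where
  "W2p_loc p \<Omega> u \<longleftrightarrow> (\<exists>g h. wgh \<Omega> u g h \<and> (\<forall>K. compact K \<and> K \<subseteq> \<Omega> \<longrightarrow>
      Lp p K u \<and> (\<forall>i. Lp p K (g i)) \<and> (\<forall>i j. Lp p K (h i j))))"

definition sob_norm :: "real \<Rightarrow> (real^'n) set \<Rightarrow> (real^'n \<Rightarrow> real) \<Rightarrow> real" where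
  "sob_norm p \<Omega> u = Lp_norm p \<Omega> u + (\<Sum>i\<in>UNIV. Lp_norm p \<Omega> (wgrad \<Omega> u i))
      + (\<Sum>i\<in>UNIV. \<Sum>j\<in>UNIV. Lp_norm p \<Omega> (whess \<Omega> u i j))"

text \<open>X = {u in W^{2,p}: u = 0 on the boundary}; for p >= n the class of u has a
  representative continuous on the closure, which must vanish on the boundary.\<close>
definition Xsp :: "real \<Rightarrow> (real^'n) set \<Rightarrow> (real^'n \<Rightarrow> real) \<Rightarrow> bool" where
  "Xsp p \<Omega> u \<longleftrightarrow> W2p p \<Omega> u \<and> (\<exists>v. continuous_on (closure \<Omega>) v
      \<and> (AE x in lebesgue_on \<Omega>. v x = u x) \<and> (\<forall>x\<in>frontier \<Omega>. v x = 0))"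

text \<open>C^{1,1} boundary: near every boundary point, Omega is the supergraph (in a direction nu)
  of a C^1 function with Lipschitz gradient defined on the hyperplane orthogonal to nu
  (encoded as a function on R^n constant along nu).\<close>
definition C11_boundary :: "(real^'n) set \<Rightarrow> bool" where
  "C11_boundary \<Omega> \<longleftrightarrow> (\<forall>x0\<in>frontier \<Omega>. \<exists>r>0. \<exists>\<nu> \<gamma> K.
      norm \<nu> = 1 \<and> (\<forall>x. \<gamma> differentiable (at x)) \<and> (\<forall>x s. \<gamma> (x + s *\<^sub>R \<nu>) = \<gamma> x)
    \<and> (\<forall>x y. norm ((\<chi> i. pdv \<gamma> i x) - (\<chi> i. pdv \<gamma> i y)) \<le> K * norm (x - y))
    \<and> \<Omega> \<inter> ball x0 r = {x \<in> ball x0 r. x \<bullet> \<nu> > \<gamma> x})"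

definition Lop :: "(real^'n) set \<Rightarrow> (real^'n \<Rightarrow> real^'n^'n) \<Rightarrow> (real^'n \<Rightarrow> real^'n)
    \<Rightarrow> (real^'n \<Rightarrow> real) \<Rightarrow> (real^'n \<Rightarrow> real) \<Rightarrow> real^'n \<Rightarrow> real" where
  "Lop \<Omega> A b c u x = (\<Sum>i\<in>UNIV. \<Sum>j\<in>UNIV. A x $ i $ j * whess \<Omega> u i j x)
      + (\<Sum>i\<in>UNIV. b x $ i * wgrad \<Omega> u i x) + c x * u x"

definition eig_set :: "(real^'n) set \<Rightarrow> (real^'n \<Rightarrow> real^'n^'n) \<Rightarrow> (real^'n \<Rightarrow> real^'n)
    \<Rightarrow> (real^'n \<Rightarrow> real) \<Rightarrow> real set" where
  "eig_set \<Omega> A b c = {\<mu>. \<exists>\<phi>. W2p_loc (real CARD('n)) \<Omega> \<phi> \<and> continuous_on \<Omega> \<phi>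
      \<and> (\<forall>x\<in>\<Omega>. \<phi> x > 0) \<and> (AE x in lebesgue_on \<Omega>. Lop \<Omega> A b c \<phi> x + \<mu> * \<phi> x \<le> 0)}"

text \<open>Coefficient s of g = z + s phi1 in Y = Z (+) R phi1 (psi = phi1^* ).\<close>
definition coef :: "(real^'n) set \<Rightarrow> (real^'n \<Rightarrow> real) \<Rightarrow> (real^'n \<Rightarrow> real) \<Rightarrow> (real^'n \<Rightarrow> real) \<Rightarrow> real" where
  "coef \<Omega> \<phi>1 \<psi> g = (\<integral>x. g x * \<psi> x \<partial>lebesgue_on \<Omega>) / (\<integral>x. \<phi>1 x * \<psi> x \<partial>lebesgue_on \<Omega>)"

definition Pproj :: "(real^'n) set \<Rightarrow> (real^'n \<Rightarrow> real) \<Rightarrow> (real^'n \<Rightarrow> real) \<Rightarrow> (real^'n \<Rightarrow> real) \<Rightarrow> real^'n \<Rightarrow> real" where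
  "Pproj \<Omega> \<phi>1 \<psi> g = (\<lambda>x. g x - coef \<Omega> \<phi>1 \<psi> g * \<phi>1 x)"

definition Fop :: "(real^'n) set \<Rightarrow> (real^'n \<Rightarrow> real^'n^'n) \<Rightarrow> (real^'n \<Rightarrow> real^'n)
    \<Rightarrow> (real^'n \<Rightarrow> real) \<Rightarrow> (real \<Rightarrow> real) \<Rightarrow> (real^'n \<Rightarrow> real) \<Rightarrow> real^'n \<Rightarrow> real" where
  "Fop \<Omega> A b c f u = (\<lambda>x. - Lop \<Omega> A b c u x - f (u x))"

definition Psi :: "(real^'n) set \<Rightarrow> (real^'n \<Rightarrow> real^'n^'n) \<Rightarrow> (real^'n \<Rightarrow> real^'n)
    \<Rightarrow> (real^'n \<Rightarrow> real) \<Rightarrow> (real^'n \<Rightarrow> real) \<Rightarrow> (real^'n \<Rightarrow> real) \<Rightarrow> (real \<Rightarrow> real)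
    \<Rightarrow> (real^'n \<Rightarrow> real) \<Rightarrow> real^'n \<Rightarrow> real" where
  "Psi \<Omega> A b c \<phi>1 \<psi> f u = (\<lambda>x. Pproj \<Omega> \<phi>1 \<psi> (Fop \<Omega> A b c f u) x + coef \<Omega> \<phi>1 \<psi> u * \<phi>1 x)"

text \<open>Psi : X -> Y is a bi-Lipschitz homeomorphism (elements of X, Y taken modulo a.e. equality).\<close>
definition bilip_homeo :: "real \<Rightarrow> (real^'n) set \<Rightarrow> (real^'n \<Rightarrow> real^'n^'n) \<Rightarrow> (real^'n \<Rightarrow> real^'n)
    \<Rightarrow> (real^'n \<Rightarrow> real) \<Rightarrow> (real^'n \<Rightarrow> real) \<Rightarrow> (real^'n \<Rightarrow> real) \<Rightarrow> (real \<Rightarrow> real) \<Rightarrow> bool" where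
  "bilip_homeo p \<Omega> A b c \<phi>1 \<psi> f \<longleftrightarrow>
     (\<forall>u. Xsp p \<Omega> u \<longrightarrow> Lp p \<Omega> (Psi \<Omega> A b c \<phi>1 \<psi> f u))
   \<and> (\<exists>K>0. \<forall>u v. Xsp p \<Omega> u \<and> Xsp p \<Omega> v \<longrightarrow>
        sob_norm p \<Omega> (\<lambda>x. u x - v x)
          \<le> K * Lp_norm p \<Omega> (\<lambda>x. Psi \<Omega> A b c \<phi>1 \<psi> f u x - Psi \<Omega> A b c \<phi>1 \<psi> f v x)
      \<and> Lp_norm p \<Omega> (\<lambda>x. Psi \<Omega> A b c \<phi>1 \<psi> f u x - Psi \<Omega> A b c \<phi>1 \<psi> f v x)
          \<le> K * sob_norm p \<Omega> (\<lambda>x. u x - v x))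
   \<and> (\<forall>y. Lp p \<Omega> y \<longrightarrow> (\<exists>u. Xsp p \<Omega> u \<and> (AE x in lebesgue_on \<Omega>. Psi \<Omega> A b c \<phi>1 \<psi> f u x = y x)))"

text \<open>Condition (AP)_b with a = 0.\<close>
definition AP_cond :: "real \<Rightarrow> (real \<Rightarrow> real) \<Rightarrow> bool" where
  "AP_cond bb f \<longleftrightarrow> (\<forall>x y. x \<noteq> y \<longrightarrow> 0 \<le> (f x - f y) / (x - y) \<and> (f x - f y) / (x - y) \<le> bb)
     \<and> (\<exists>M\<ge>0. \<forall>s. f s \<ge> max (bb * s - M) (- M))"

end

theory Submission
  imports Defs "HOL-Computational_Algebra.Polynomial"
begin

text \<open>Since \<open>\<Psi>\<close> is bi-Lipschitz, \<open>\<parallel>u(z,t) - t\<phi>\<^sub>1\<parallel>\<^sub>X \<le> K \<parallel>z + t\<phi>\<^sub>1 - \<Psi>(t\<phi>\<^sub>1)\<parallel>\<^sub>p\<close>, and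
  \<open>\<Psi>(t\<phi>\<^sub>1) = t\<phi>\<^sub>1 - P(f(t\<phi>\<^sub>1))\<close> because \<open>\<phi>\<^sub>1\<close> is an eigenfunction and \<open>P \<phi>\<^sub>1 = 0\<close>. By \<open>(AP)\<^sub>b\<close>,
  \<open>f(s)\<close> differs from the ramp \<open>b max s 0\<close> by a bounded amount, and on the ray \<open>t\<phi>\<^sub>1\<close> (with
  \<open>\<phi>\<^sub>1 > 0\<close>) the ramp is a multiple of \<open>\<phi>\<^sub>1\<close>, which \<open>P\<close> annihilates. Hence \<open>\<parallel>u(z,t) - t\<phi>\<^sub>1\<parallel>\<^sub>X\<close>
  is bounded uniformly in \<open>t\<close>, and dividing by \<open>t\<close> gives the limits.

  Dividing by \<open>t\<close> requires the \<open>W\<^sup>2\<^sup>,\<^sup>p\<close> norm to be homogeneous, i.e. weak derivatives to be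
  unique almost everywhere; this is the fundamental lemma of the calculus of variations, proved with
  smooth bump functions built from \<open>exp (-1/y)\<close>.\<close>

section \<open>Smooth functions of one real variable\<close>

fun Ck :: "nat \<Rightarrow> (real \<Rightarrow> real) \<Rightarrow> bool" where
  "Ck 0 g = True"
| "Ck (Suc n) g \<longleftrightarrow> (\<forall>x. g field_differentiable (at x)) \<and> Ck n (deriv g)"

definition smooth_real :: "(real \<Rightarrow> real) \<Rightarrow> bool" where
  "smooth_real g \<longleftrightarrow> (\<forall>n. Ck n g)"

lemma Ck_SucD: "Ck (Suc n) g \<Longrightarrow> Ck n g"
  by (induction n arbitrary: g) auto

lemma deriv_add_fun:
  assumes "\<forall>x. g field_differentiable (at x)" "\<forall>x. h field_differentiable (at x)"
  shows "deriv (\<lambda>x. g x + h x) = (\<lambda>x. deriv g x + deriv h x)"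
proof
  fix x
  show "deriv (\<lambda>x. g x + h x) x = deriv g x + deriv h x"
    by (rule DERIV_imp_deriv)
      (use assms in \<open>auto intro!: derivative_intros simp: DERIV_deriv_iff_field_differentiable\<close>)
qed

lemma deriv_mult_fun:
  assumes "\<forall>x. g field_differentiable (at x)" "\<forall>x. h field_differentiable (at x)"
  shows "deriv (\<lambda>x. g x * h x) = (\<lambda>x. deriv g x * h x + g x * deriv h x)"
proof
  fix x
  show "deriv (\<lambda>x. g x * h x) x = deriv g x * h x + g x * deriv h x"
    by (rule DERIV_imp_deriv)
      (use DERIV_mult[of g "deriv g x" x UNIV h "deriv h x"] assms
        in \<open>auto simp: DERIV_deriv_iff_field_differentiable algebra_simps\<close>)
qed

lemma Ck_add: "Ck n g \<Longrightarrow> Ck n h \<Longrightarrow> Ck n (\<lambda>x. g x + h x)"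
  by (induction n arbitrary: g h) (auto simp: deriv_add_fun intro!: field_differentiable_add)

lemma Ck_mult: "Ck n g \<Longrightarrow> Ck n h \<Longrightarrow> Ck n (\<lambda>x. g x * h x)"
proof (induction n arbitrary: g h)
  case (Suc n)
  have "Ck n (\<lambda>x. deriv g x * h x + g x * deriv h x)"
    using Suc by (intro Ck_add Suc.IH) (auto intro: Ck_SucD)
  then show ?case
    using Suc.prems by (auto simp: deriv_mult_fun intro!: field_differentiable_mult)
qed simp

lemma Ck_const: "Ck n (\<lambda>x. c)"
proof (induction n arbitrary: c)
  case (Suc n)
  have "deriv (\<lambda>x. c) = (\<lambda>x. 0)" by (rule ext) simp
  then show ?case using Suc by simp
qed simp

lemma Ck_affine: "Ck n g \<Longrightarrow> Ck n (\<lambda>s. g (\<alpha> * s + \<beta>))"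
proof (induction n arbitrary: g)
  case (Suc n)
  have "((\<lambda>s. g (\<alpha> * s + \<beta>)) has_field_derivative deriv g (\<alpha> * s + \<beta>) * \<alpha>) (at s)" for s
    using Suc.prems
    by (auto intro!: derivative_eq_intros DERIV_chain2[where f=g]
        simp: DERIV_deriv_iff_field_differentiable)
  then have has_deriv: "((\<lambda>s. g (\<alpha> * s + \<beta>)) has_field_derivative \<alpha> * deriv g (\<alpha> * s + \<beta>)) (at s)" for s
    by (subst mult.commute)
  then have "deriv (\<lambda>s. g (\<alpha> * s + \<beta>)) = (\<lambda>s. \<alpha> * deriv g (\<alpha> * s + \<beta>))"
    by (intro ext DERIV_imp_deriv)
  moreover have "Ck n (\<lambda>s. \<alpha> * deriv g (\<alpha> * s + \<beta>))"
    using Suc by (intro Ck_mult[OF Ck_const]) auto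
  ultimately show ?case
    using has_deriv by (auto simp: field_differentiable_def)
qed simp

lemma smooth_real_mult: "smooth_real g \<Longrightarrow> smooth_real h \<Longrightarrow> smooth_real (\<lambda>x. g x * h x)"
  by (simp add: smooth_real_def Ck_mult)

lemma smooth_real_affine: "smooth_real g \<Longrightarrow> smooth_real (\<lambda>s. g (\<alpha> * s + \<beta>))"
  by (simp add: smooth_real_def Ck_affine)

lemma smooth_real_deriv: "smooth_real g \<Longrightarrow> smooth_real (deriv g)"
  unfolding smooth_real_def by (metis Ck.simps(2))

lemma smooth_real_has_derivative: "smooth_real g \<Longrightarrow> (g has_field_derivative deriv g x) (at x)"
  unfolding smooth_real_def by (metis Ck.simps(2) DERIV_deriv_iff_field_differentiable)

lemma poly_times_exp_tendsto_0:
  fixes \<epsilon> :: real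
  assumes "\<epsilon> > 0"
  shows "((\<lambda>w. poly q w * exp (- \<epsilon> * w)) \<longlongrightarrow> 0) at_top"
proof -
  have monomial: "((\<lambda>w. w ^ i * exp (- \<epsilon> * w)) \<longlongrightarrow> 0) at_top" for i
  proof -
    have "((\<lambda>w. (\<epsilon> * w) ^ i / exp (\<epsilon> * w)) \<longlongrightarrow> 0) at_top"
      by (rule filterlim_compose[OF tendsto_power_div_exp_0])
        (use assms in \<open>auto intro!: filterlim_tendsto_pos_mult_at_top filterlim_ident\<close>)
    then have "((\<lambda>w. (1 / \<epsilon> ^ i) * ((\<epsilon> * w) ^ i / exp (\<epsilon> * w))) \<longlongrightarrow> 0) at_top"
      by (rule tendsto_mult_right_zero)
    moreover have "(1 / \<epsilon> ^ i) * ((\<epsilon> * w) ^ i / exp (\<epsilon> * w)) = w ^ i * exp (- \<epsilon> * w)" for w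
      using assms by (simp add: power_mult_distrib exp_minus field_simps)
    ultimately show ?thesis by simp
  qed
  have "((\<lambda>w. \<Sum>i\<le>degree q. coeff q i * (w ^ i * exp (- \<epsilon> * w))) \<longlongrightarrow> (\<Sum>i\<le>degree q. coeff q i * 0)) at_top"
    by (intro tendsto_sum tendsto_mult tendsto_const monomial)
  then show ?thesis
    by (simp add: poly_altdef sum_distrib_right mult.assoc)
qed

text \<open>Every derivative of \<open>exp (-\<epsilon>/y)\<close> (extended by \<open>0\<close> for \<open>y \<le> 0\<close>) has the form
  \<open>flat_poly \<epsilon> p\<close>; \<open>flat_deriv_poly\<close> computes the polynomial of the next derivative.\<close>

definition flat_poly :: "real \<Rightarrow> real poly \<Rightarrow> real \<Rightarrow> real" where
  "flat_poly \<epsilon> p y = (if y > 0 then poly p (1 / y) * exp (- \<epsilon> / y) else 0)"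

definition flat_deriv_poly :: "real \<Rightarrow> real poly \<Rightarrow> real poly" where
  "flat_deriv_poly \<epsilon> p = [:0, 0, 1:] * (smult \<epsilon> p - pderiv p)"

lemma flat_poly_has_derivative:
  assumes e: "\<epsilon> > 0"
  shows "(flat_poly \<epsilon> p has_field_derivative flat_poly \<epsilon> (flat_deriv_poly \<epsilon> p) y) (at y)"
proof (cases y "0::real" rule: linorder_cases)
  case greater
  have "((\<lambda>y. poly p (1 / y) * exp (- \<epsilon> / y)) has_field_derivative
      poly (pderiv p) (1 / y) * (- 1 / y^2) * exp (- \<epsilon> / y) + poly p (1 / y) * (exp (- \<epsilon> / y) * (\<epsilon> / y^2))) (at y)"
    using greater
    by (auto intro!: derivative_eq_intros DERIV_chain2[OF poly_DERIV] simp: power2_eq_square field_simps)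
  moreover have "poly (pderiv p) (1 / y) * (- 1 / y^2) * exp (- \<epsilon> / y) + poly p (1 / y) * (exp (- \<epsilon> / y) * (\<epsilon> / y^2))
      = flat_poly \<epsilon> (flat_deriv_poly \<epsilon> p) y"
    using greater by (simp add: flat_poly_def flat_deriv_poly_def power2_eq_square field_simps)
  ultimately have "((\<lambda>y. poly p (1 / y) * exp (- \<epsilon> / y)) has_field_derivative
      flat_poly \<epsilon> (flat_deriv_poly \<epsilon> p) y) (at y)"
    by simp
  then show ?thesis
    by (rule has_field_derivative_transform_within_open[where S="{0<..}"])
      (use greater in \<open>auto simp: flat_poly_def\<close>)
next
  case less
  have "((\<lambda>y. 0) has_field_derivative flat_poly \<epsilon> (flat_deriv_poly \<epsilon> p) y) (at y)"
    using less by (simp add: flat_poly_def)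
  then show ?thesis
    by (rule has_field_derivative_transform_within_open[where S="{..<0}"])
      (use less in \<open>auto simp: flat_poly_def\<close>)
next
  case equal
  have "((\<lambda>z. (flat_poly \<epsilon> p z - flat_poly \<epsilon> p 0) / (z - 0)) \<longlongrightarrow> 0) (at 0)"
  proof (rule filterlim_split_at)
    show "((\<lambda>z. (flat_poly \<epsilon> p z - flat_poly \<epsilon> p 0) / (z - 0)) \<longlongrightarrow> 0) (at_left 0)"
      by (rule tendsto_eventually)
        (auto simp: eventually_at_left_field flat_poly_def intro!: exI[of _ "-1"])
  next
    \<comment> \<open>on the right, substitute \<open>z = 1/w\<close>: the difference quotient becomes \<open>w p(w) exp (-\<epsilon> w)\<close>\<close>
    have "\<forall>\<^sub>F w in at_top. poly (pCons 0 p) w * exp (- \<epsilon> * w)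
        = (flat_poly \<epsilon> p (inverse w) - flat_poly \<epsilon> p 0) / (inverse w - 0)"
      using eventually_gt_at_top[of 0] by eventually_elim (auto simp: flat_poly_def field_simps)
    with poly_times_exp_tendsto_0[OF e]
    have "((\<lambda>w. (flat_poly \<epsilon> p (inverse w) - flat_poly \<epsilon> p 0) / (inverse w - 0)) \<longlongrightarrow> 0) at_top"
      by (rule Lim_transform_eventually)
    then show "((\<lambda>z. (flat_poly \<epsilon> p z - flat_poly \<epsilon> p 0) / (z - 0)) \<longlongrightarrow> 0) (at_right 0)"
      by (simp add: filterlim_at_right_to_top)
  qed
  moreover have "flat_poly \<epsilon> (flat_deriv_poly \<epsilon> p) 0 = 0"
    by (simp add: flat_poly_def)
  ultimately show ?thesis
    using equal by (simp add: has_field_derivative_iff)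
qed

lemma smooth_real_flat_poly:
  assumes "\<epsilon> > 0"
  shows "smooth_real (flat_poly \<epsilon> p)"
proof -
  have "Ck n (flat_poly \<epsilon> p)" for n
  proof (induction n arbitrary: p)
    case (Suc n)
    have "deriv (flat_poly \<epsilon> p) = flat_poly \<epsilon> (flat_deriv_poly \<epsilon> p)"
      using flat_poly_has_derivative[OF assms] by (auto intro!: ext DERIV_imp_deriv)
    then show ?case
      using flat_poly_has_derivative[OF assms, of p] Suc.IH[of "flat_deriv_poly \<epsilon> p"]
      by (auto simp: field_differentiable_def)
  qed simp
  then show ?thesis by (simp add: smooth_real_def)
qed

lemma flat_poly_1: "flat_poly \<epsilon> 1 y = (if y > 0 then exp (- \<epsilon> / y) else 0)"
  by (simp add: flat_poly_def)

section \<open>Bump functions on boxes\<close>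

definition prod_coords :: "('n \<Rightarrow> real \<Rightarrow> real) \<Rightarrow> real^'n \<Rightarrow> real" where
  "prod_coords G x = (\<Prod>i\<in>UNIV. G i (x$i))"

lemma coord_has_derivative:
  fixes x :: "real^'n"
  assumes "(g has_field_derivative d) (at (x$i))"
  shows "((\<lambda>x. g (x$i)) has_derivative (\<lambda>h. h$i * d)) (at x)"
proof -
  have "((\<lambda>x::real^'n. x$i) has_derivative (\<lambda>h. h$i)) (at x)"
    by (rule bounded_linear_imp_has_derivative) (rule bounded_linear_vec_nth)
  from has_derivative_compose[OF this has_field_derivative_imp_has_derivative[OF assms]]
  show ?thesis by (simp add: mult.commute)
qed

lemma prod_coords_has_derivative:
  fixes G :: "'n::finite \<Rightarrow> real \<Rightarrow> real"
  assumes "\<And>i. (G i has_field_derivative G' i (x$i)) (at (x$i))"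
  shows "(prod_coords G has_derivative
      (\<lambda>h. \<Sum>i\<in>UNIV. h$i * G' i (x$i) * (\<Prod>j\<in>UNIV - {i}. G j (x$j)))) (at x)"
  unfolding prod_coords_def
  by (rule has_derivative_prod) (rule coord_has_derivative[OF assms])

lemma prod_coords_differentiable:
  fixes G :: "'n::finite \<Rightarrow> real \<Rightarrow> real"
  assumes "\<And>i. smooth_real (G i)"
  shows "prod_coords G differentiable (at x)"
  using prod_coords_has_derivative[of G "\<lambda>i. deriv (G i)" x] smooth_real_has_derivative[OF assms]
  unfolding differentiable_def by blast

lemma pdv_prod_coords:
  fixes G :: "'n::finite \<Rightarrow> real \<Rightarrow> real"
  assumes "\<And>i. smooth_real (G i)"
  shows "pdv (prod_coords G) k = prod_coords (G(k := deriv (G k)))"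
proof
  fix x :: "real^'n"
  have "(prod_coords G has_derivative
      (\<lambda>h. \<Sum>i\<in>UNIV. h$i * deriv (G i) (x$i) * (\<Prod>j\<in>UNIV - {i}. G j (x$j)))) (at x)"
    by (rule prod_coords_has_derivative) (rule smooth_real_has_derivative[OF assms])
  then have "pdv (prod_coords G) k x
      = (\<Sum>i\<in>UNIV. (axis k 1 :: real^'n)$i * deriv (G i) (x$i) * (\<Prod>j\<in>UNIV - {i}. G j (x$j)))"
    unfolding pdv_def by (simp add: frechet_derivative_at[symmetric])
  also have "\<dots> = deriv (G k) (x$k) * (\<Prod>j\<in>UNIV - {k}. G j (x$j))"
    by (subst sum.remove[of _ k]) (auto simp: axis_def)
  also have "\<dots> = prod_coords (G(k := deriv (G k))) x"
    unfolding prod_coords_def by (subst prod.remove[of _ k]) (auto intro!: prod.cong)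
  finally show "pdv (prod_coords G) k x = prod_coords (G(k := deriv (G k))) x" .
qed

lemma smooth_fun_prod_coords:
  fixes G :: "'n::finite \<Rightarrow> real \<Rightarrow> real"
  assumes "\<And>i. smooth_real (G i)"
  shows "smooth_fun (prod_coords G)"
proof -
  have "\<exists>G'. (\<forall>i. smooth_real (G' i)) \<and> foldr (\<lambda>i g. pdv g i) ks (prod_coords G) = prod_coords G'"
    if "\<forall>i. smooth_real (G i)" for ks :: "'n list" and G :: "'n \<Rightarrow> real \<Rightarrow> real"
    using that
  proof (induction ks arbitrary: G)
    case (Cons k ks)
    then obtain G' where "\<forall>i. smooth_real (G' i)" "foldr (\<lambda>i g. pdv g i) ks (prod_coords G) = prod_coords G'"
      by blast
    then show ?case
      by (intro exI[of _ "G'(k := deriv (G' k))"]) (auto simp: pdv_prod_coords smooth_real_deriv fun_upd_def)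
  qed auto
  then show ?thesis
    unfolding smooth_fun_def using assms prod_coords_differentiable by metis
qed

definition bump :: "real \<Rightarrow> real^'n \<Rightarrow> real^'n \<Rightarrow> real^'n \<Rightarrow> real" where
  "bump \<epsilon> a b = prod_coords (\<lambda>i s. flat_poly \<epsilon> 1 (s - a$i) * flat_poly \<epsilon> 1 (b$i - s))"

lemma smooth_real_bump_factor:
  assumes "\<epsilon> > 0"
  shows "smooth_real (\<lambda>s. flat_poly \<epsilon> 1 (s - \<alpha>) * flat_poly \<epsilon> 1 (\<beta> - s))"
proof -
  have "smooth_real (\<lambda>s. flat_poly \<epsilon> 1 (1 * s + - \<alpha>) * flat_poly \<epsilon> 1 ((-1) * s + \<beta>))"
    by (intro smooth_real_mult smooth_real_affine smooth_real_flat_poly assms)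
  then show ?thesis by simp
qed

lemma smooth_fun_bump: "\<epsilon> > 0 \<Longrightarrow> smooth_fun (bump \<epsilon> a b)"
  unfolding bump_def by (intro smooth_fun_prod_coords smooth_real_bump_factor)

lemma smooth_fun_bump_mult:
  assumes "\<epsilon> > 0" "\<epsilon>' > 0"
  shows "smooth_fun (\<lambda>x. bump \<epsilon> a b x * bump \<epsilon>' a' b' x)"
proof -
  have "(\<lambda>x. bump \<epsilon> a b x * bump \<epsilon>' a' b' x) = prod_coords (\<lambda>i s.
      (flat_poly \<epsilon> 1 (s - a$i) * flat_poly \<epsilon> 1 (b$i - s)) * (flat_poly \<epsilon>' 1 (s - a'$i) * flat_poly \<epsilon>' 1 (b'$i - s)))"
    by (rule ext) (simp add: bump_def prod_coords_def prod.distrib)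
  then show ?thesis
    using assms by (simp add: smooth_fun_prod_coords smooth_real_mult smooth_real_bump_factor)
qed

lemma bump_bounds: "\<epsilon> \<ge> 0 \<Longrightarrow> 0 \<le> bump \<epsilon> a b x \<and> bump \<epsilon> a b x \<le> 1"
  unfolding bump_def prod_coords_def flat_poly_1
  by (auto intro!: prod_nonneg prod_le_1 mult_le_one)

lemma bump_eq_0_iff: "bump \<epsilon> a b x = 0 \<longleftrightarrow> x \<notin> box a b"
  unfolding bump_def prod_coords_def mem_box_cart by (auto simp: flat_poly_1)

lemma bump_measurable:
  assumes "\<epsilon> > 0"
  shows "bump \<epsilon> a b \<in> borel_measurable lebesgue"
proof -
  have "continuous_on UNIV (bump \<epsilon> a b)"
    unfolding bump_def
    by (intro differentiable_imp_continuous_on differentiable_at_imp_differentiable_on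
        prod_coords_differentiable smooth_real_bump_factor assms)
  then show ?thesis
    by (intro measurable_completion) (simp add: borel_measurable_continuous_onI)
qed

lemma bump_tendsto_indicator: "(\<lambda>m. bump (1 / Suc m) a b x) \<longlonglongrightarrow> indicator (box a b) x"
proof (cases "x \<in> box a b")
  case True
  then have pos: "x$i - a$i > 0" "b$i - x$i > 0" for i
    by (auto simp: mem_box_cart)
  then have nonzero: "x$i - a$i \<noteq> 0" "b$i - x$i \<noteq> 0" for i
    by (metis less_irrefl)+
  have "(\<lambda>m. 1 / (1 + real m)) \<longlonglongrightarrow> 0"
    using LIMSEQ_Suc[OF lim_1_over_n] by simp
  then have "(\<lambda>m. \<Prod>i\<in>UNIV. exp (- (1 / Suc m) / (x$i - a$i)) * exp (- (1 / Suc m) / (b$i - x$i)))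
      \<longlonglongrightarrow> (\<Prod>i\<in>UNIV. exp (- 0 / (x$i - a$i)) * exp (- 0 / (b$i - x$i)))"
    using nonzero by (intro tendsto_intros) auto
  moreover have "bump (1 / Suc m) a b x
      = (\<Prod>i\<in>UNIV. exp (- (1 / Suc m) / (x$i - a$i)) * exp (- (1 / Suc m) / (b$i - x$i)))" for m
    unfolding bump_def prod_coords_def using pos by (simp add: flat_poly_1)
  ultimately show ?thesis using True by simp
next
  case False
  then have "bump (1 / Suc m) a b x = 0" for m
    by (simp add: bump_eq_0_iff)
  then show ?thesis using False by simp
qed

lemma test_funI_box:
  assumes "smooth_fun \<phi>" "\<And>x. x \<notin> box a b \<Longrightarrow> \<phi> x = 0" "cbox a b \<subseteq> \<Omega>"
  shows "test_fun \<Omega> \<phi>"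
proof -
  have support: "{x. \<phi> x \<noteq> 0} \<subseteq> cbox a b"
    using assms(2) box_subset_cbox by blast
  have "closure {x. \<phi> x \<noteq> 0} \<subseteq> cbox a b" "bounded {x. \<phi> x \<noteq> 0}"
    by (rule closure_minimal[OF support closed_cbox], rule bounded_subset[OF bounded_cbox support])
  then show ?thesis
    unfolding test_fun_def using assms(1,3) by auto
qed

lemma tendsto_integral_mult_bump:
  fixes F :: "real^'n \<Rightarrow> real"
  assumes "integrable lebesgue F"
  shows "(\<lambda>m. \<integral>x. F x * bump (1 / Suc m) a b x \<partial>lebesgue)
      \<longlonglongrightarrow> (\<integral>x. F x * indicator (box a b) x \<partial>lebesgue)"
proof (rule integral_dominated_convergence[where w="\<lambda>x. norm (F x)"])
  have "indicator (box a b) \<in> borel_measurable lebesgue"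
    by (intro measurable_completion) simp
  then show "(\<lambda>x. F x * indicator (box a b) x) \<in> borel_measurable lebesgue"
    using assms by measurable
  show "(\<lambda>x. F x * bump (1 / Suc m) a b x) \<in> borel_measurable lebesgue" for m
    using assms bump_measurable[of "1 / Suc m" a b] by measurable
  show "AE x in lebesgue. norm (F x * bump (1 / Suc m) a b x) \<le> norm (F x)" for m
    using bump_bounds[of "1 / Suc m" a b] by (auto simp: abs_mult mult_left_le)
  show "AE x in lebesgue. (\<lambda>m. F x * bump (1 / Suc m) a b x) \<longlonglongrightarrow> F x * indicator (box a b) x"
    by (intro AE_I2 tendsto_mult_left bump_tendsto_indicator)
qed (use assms in auto)

section \<open>The fundamental lemma of the calculus of variations\<close>

lemma emeasure_density_integrable:
  fixes F :: "'a \<Rightarrow> real"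
  assumes F: "integrable M F" and A: "A \<in> sets M"
  shows "emeasure (density M (\<lambda>x. ennreal (F x))) A = ennreal (\<integral>x. max 0 (F x) * indicator A x \<partial>M)"
proof -
  have "emeasure (density M (\<lambda>x. ennreal (F x))) A = (\<integral>\<^sup>+ x. ennreal (F x) * indicator A x \<partial>M)"
    using F A by (intro emeasure_density) auto
  also have "\<dots> = (\<integral>\<^sup>+ x. ennreal (max 0 (F x) * indicator A x) \<partial>M)"
    by (intro nn_integral_cong) (auto simp: indicator_def ennreal_neg max_def)
  also have "\<dots> = ennreal (\<integral>x. max 0 (F x) * indicator A x \<partial>M)"
    using F A by (intro nn_integral_eq_integral) (auto intro!: integrable_real_mult_indicator integrable_max)
  finally show ?thesis .
qed

lemma integral_mult_indicator_sign_split: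
  fixes F :: "'a \<Rightarrow> real"
  assumes F: "integrable M F" and A: "A \<in> sets M"
  shows "(\<integral>x. F x * indicator A x \<partial>M) =
    (\<integral>x. max 0 (F x) * indicator A x \<partial>M) - (\<integral>x. max 0 (- F x) * indicator A x \<partial>M)"
proof -
  have "(\<integral>x. max 0 (F x) * indicator A x \<partial>M) - (\<integral>x. max 0 (- F x) * indicator A x \<partial>M)
      = (\<integral>x. max 0 (F x) * indicator A x - max 0 (- F x) * indicator A x \<partial>M)"
    using F A by (intro Bochner_Integration.integral_diff[symmetric])
      (auto intro!: integrable_real_mult_indicator integrable_max)
  also have "\<dots> = (\<integral>x. F x * indicator A x \<partial>M)"
    by (intro Bochner_Integration.integral_cong) (auto simp: max_def indicator_def)
  finally show ?thesis by simp
qed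

lemma AE_lborel_zero_if_box_integrals_zero:
  fixes F :: "'a::euclidean_space \<Rightarrow> real"
  assumes F: "integrable lborel F"
    and boxes: "\<And>a b. (\<integral>x. F x * indicator (box a b) x \<partial>lborel) = 0"
  shows "AE x in lborel. F x = 0"
proof -
  let ?Npos = "density lborel (\<lambda>x. ennreal (F x))"
  let ?Nneg = "density lborel (\<lambda>x. ennreal (- F x))"
  \<comment> \<open>The densities of \<open>F\<^sup>+\<close> and \<open>F\<^sup>-\<close> agree on the \<open>\<inter>\<close>-stable generator of open boxes.\<close>
  have "?Npos = ?Nneg"
  proof (rule measure_eqI_generator_eq)
    let ?E = "range (\<lambda>(a, b). box a b::'a set)"
    show "Int_stable ?E"
      by (auto simp: Int_stable_def box_Int_box)
    show "?E \<subseteq> Pow UNIV" "sets ?Npos = sigma_sets UNIV ?E" "sets ?Nneg = sigma_sets UNIV ?E"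
      by (simp_all add: borel_eq_box)
    let ?A = "\<lambda>n::nat. box (- (real n *\<^sub>R One)) (real n *\<^sub>R One) :: 'a set"
    show "range ?A \<subseteq> ?E" "(\<Union>i. ?A i) = UNIV"
      unfolding UN_box_eq_UNIV by auto
    show "emeasure ?Npos (?A i) \<noteq> \<infinity>" for i
      using emeasure_density_integrable[OF F, of "?A i"] by simp
    show "emeasure ?Npos X = emeasure ?Nneg X" if "X \<in> ?E" for X
      using that boxes integral_mult_indicator_sign_split[OF F, of X] emeasure_density_integrable[OF F, of X]
        emeasure_density_integrable[of lborel "\<lambda>x. - F x" X] F
      by auto
  qed
  then have "AE x in lborel. ennreal (F x) = ennreal (- F x)"
    using F by (subst sigma_finite_measure.density_unique_iff[OF sigma_finite_lborel, symmetric]) auto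
  then show ?thesis
  proof eventually_elim
    case (elim x)
    then show ?case
      by (cases "F x \<ge> 0") (auto simp: ennreal_neg)
  qed
qed

lemma AE_zero_if_box_integrals_zero:
  fixes F :: "'a::euclidean_space \<Rightarrow> real"
  assumes F: "integrable lebesgue F"
    and boxes: "\<And>a b. (\<integral>x. F x * indicator (box a b) x \<partial>lebesgue) = 0"
  shows "AE x in lebesgue. F x = 0"
proof -
  obtain F' where F': "F' \<in> borel_measurable lborel" and ae: "AE x in lborel. F x = F' x"
    using F completion_ex_borel_measurable_real[of F lborel] by auto
  have ae_lebesgue: "AE x in lebesgue. F x = F' x"
    using ae by (rule AE_completion)
  have "integrable lebesgue F'"
    using F' ae_lebesgue by (intro integrable_cong_AE_imp[OF F]) (auto intro: measurable_completion)
  then have "integrable lborel F'"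
    using integrable_completion[OF F'] by simp
  moreover have "(\<integral>x. F' x * indicator (box a b) x \<partial>lborel) = 0" for a b
  proof -
    have "(\<integral>x. F' x * indicator (box a b) x \<partial>lborel) = (\<integral>x. F' x * indicator (box a b) x \<partial>lebesgue)"
      using F' by (intro integral_completion[symmetric]) auto
    also have "\<dots> = (\<integral>x. F x * indicator (box a b) x \<partial>lebesgue)"
    proof (rule integral_cong_AE)
      have "indicator (box a b) \<in> borel_measurable lebesgue"
        by (intro measurable_completion) simp
      then show "(\<lambda>x. F x * indicator (box a b) x) \<in> borel_measurable lebesgue"
        using F by measurable
    qed (use ae_lebesgue F' in \<open>auto elim: AE_mp intro: measurable_completion\<close>)
    finally show ?thesis using boxes by simp
  qed
  ultimately have "AE x in lborel. F' x = 0"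
    by (rule AE_lborel_zero_if_box_integrals_zero)
  with ae have "AE x in lborel. F x = 0"
    by eventually_elim simp
  then show ?thesis
    by (rule AE_completion)
qed

definition distrib_zero :: "(real^'n) set \<Rightarrow> (real^'n \<Rightarrow> real) \<Rightarrow> bool" where
  "distrib_zero \<Omega> d \<longleftrightarrow> (\<forall>\<phi>. test_fun \<Omega> \<phi> \<longrightarrow> integrable (lebesgue_on \<Omega>) (\<lambda>x. d x * \<phi> x)
      \<and> (\<integral>x. d x * \<phi> x \<partial>lebesgue_on \<Omega>) = 0)"

lemma distrib_zero_AE_zero_on_box:
  fixes d :: "real^'n \<Rightarrow> real"
  assumes \<Omega>: "\<Omega> \<in> sets lebesgue" and ab: "cbox a b \<subseteq> \<Omega>" and d: "distrib_zero \<Omega> d"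
  shows "AE x in lebesgue. x \<in> box a b \<longrightarrow> d x = 0"
proof -
  have \<Omega>': "\<Omega> \<inter> space lebesgue \<in> sets lebesgue"
    using \<Omega> by simp
  \<comment> \<open>Weighting \<open>d\<close> by a bump turns its local integrability into global integrability.\<close>
  define F where "F x = indicator \<Omega> x * (d x * bump 1 a b x)" for x
  have "test_fun \<Omega> (bump 1 a b)"
    using ab by (intro test_funI_box smooth_fun_bump) (auto simp: bump_eq_0_iff)
  then have F: "integrable lebesgue F"
    using d unfolding distrib_zero_def F_def integrable_restrict_space[OF \<Omega>'] by simp
  have "(\<integral>x. F x * indicator (box c e) x \<partial>lebesgue) = 0" for c e
  proof -
    have "test_fun \<Omega> (\<lambda>x. bump 1 a b x * bump (1 / Suc m) c e x)" for m
      using ab by (intro test_funI_box smooth_fun_bump_mult) (auto simp: bump_eq_0_iff)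
    then have "(\<integral>x. F x * bump (1 / Suc m) c e x \<partial>lebesgue) = 0" for m
      using d unfolding distrib_zero_def F_def integral_restrict_space[OF \<Omega>']
      by (simp add: mult.assoc)
    then show ?thesis
      using tendsto_integral_mult_bump[OF F, of c e] by (simp add: LIMSEQ_const_iff)
  qed
  then have "AE x in lebesgue. F x = 0"
    by (rule AE_zero_if_box_integrals_zero[OF F])
  then show ?thesis
  proof eventually_elim
    case (elim x)
    then show ?case
      using ab box_subset_cbox[of a b] by (auto simp: F_def bump_eq_0_iff)
  qed
qed

lemma distrib_zero_AE_zero:
  fixes d :: "real^'n \<Rightarrow> real"
  assumes \<Omega>: "open \<Omega>" and d: "distrib_zero \<Omega> d"
  shows "AE x in lebesgue_on \<Omega>. d x = 0"
proof -
  define \<B> where "\<B> = {box a b | a b :: real^'n. cbox a b \<subseteq> \<Omega>}"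
  obtain \<B>' where \<B>': "\<B>' \<subseteq> \<B>" "countable \<B>'" "\<Union>\<B>' = \<Union>\<B>"
    by (rule Lindelof[of \<B>]) (auto simp: \<B>_def)
  have cover: "\<Omega> \<subseteq> \<Union>\<B>"
  proof
    fix x assume "x \<in> \<Omega>"
    then obtain a b where "cbox a b \<subseteq> \<Omega>" "x \<in> box a b"
      using \<Omega> open_contains_cbox by metis
    then show "x \<in> \<Union>\<B>" by (auto simp: \<B>_def)
  qed
  have "\<forall>B\<in>\<B>'. AE x in lebesgue. x \<in> B \<longrightarrow> d x = 0"
    using \<B>'(1) distrib_zero_AE_zero_on_box[OF _ _ d] \<Omega> by (auto simp: \<B>_def)
  then have "AE x in lebesgue. \<forall>B\<in>\<B>'. x \<in> B \<longrightarrow> d x = 0"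
    by (rule AE_ball_countable[OF \<B>'(2), THEN iffD2])
  then have "AE x in lebesgue. x \<in> \<Omega> \<longrightarrow> d x = 0"
    by eventually_elim (use cover \<B>'(3) in blast)
  then show ?thesis
    using \<Omega> by (simp add: AE_restrict_space_iff)
qed

section \<open>Lebesgue spaces\<close>

lemma borel_measurable_lebesgue_on_AE:
  fixes f g :: "'a::euclidean_space \<Rightarrow> real"
  assumes S: "S \<in> sets lebesgue" and f: "f \<in> borel_measurable (lebesgue_on S)"
    and ae: "AE x in lebesgue_on S. f x = g x"
  shows "g \<in> borel_measurable (lebesgue_on S)"
proof -
  have S': "S \<inter> space lebesgue \<in> sets lebesgue"
    using S by simp
  have "AE x in lebesgue. indicator S x *\<^sub>R f x = indicator S x *\<^sub>R g x"
    using ae by (simp add: AE_restrict_space_iff[OF S']) (auto elim: AE_mp simp: indicator_def)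
  then have "(\<lambda>x. indicator S x *\<^sub>R g x) \<in> borel_measurable lebesgue"
    using f borel_measurable_restrict_space_iff[OF S'] by (blast intro: borel_measurable_AE)
  then show ?thesis
    using borel_measurable_restrict_space_iff[OF S'] by blast
qed

lemma Lp_norm_cong_AE:
  fixes f g :: "real^'n \<Rightarrow> real"
  assumes S: "S \<in> sets lebesgue" and f: "f \<in> borel_measurable (lebesgue_on S)"
    and ae: "AE x in lebesgue_on S. f x = g x"
  shows "Lp_norm p S f = Lp_norm p S g"
proof -
  have g: "g \<in> borel_measurable (lebesgue_on S)"
    by (rule borel_measurable_lebesgue_on_AE[OF S f ae])
  have "(\<integral>x. \<bar>f x\<bar> powr p \<partial>lebesgue_on S) = (\<integral>x. \<bar>g x\<bar> powr p \<partial>lebesgue_on S)"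
    using f g ae by (intro integral_cong_AE) (auto elim: AE_mp)
  then show ?thesis
    by (simp add: Lp_norm_def)
qed

lemma Lp_norm_mult:
  assumes "p > 0"
  shows "Lp_norm p S (\<lambda>x. c * f x) = \<bar>c\<bar> * Lp_norm p S f"
proof -
  have "(\<integral>x. \<bar>c * f x\<bar> powr p \<partial>lebesgue_on S) = \<bar>c\<bar> powr p * (\<integral>x. \<bar>f x\<bar> powr p \<partial>lebesgue_on S)"
    by (simp add: abs_mult powr_mult)
  moreover have "(\<integral>x. \<bar>f x\<bar> powr p \<partial>lebesgue_on S) \<ge> 0"
    by (rule integral_nonneg_AE) simp
  ultimately show ?thesis
    using assms by (simp add: Lp_norm_def powr_mult powr_powr)
qed

lemma Lp_norm_nonneg: "Lp_norm p S f \<ge> 0"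
  by (simp add: Lp_norm_def)

lemma Lp_norm_mono:
  assumes p: "p > 0" and G: "Lp p S G" and R: "R \<in> borel_measurable (lebesgue_on S)"
    and le: "AE x in lebesgue_on S. \<bar>R x\<bar> \<le> G x"
  shows "Lp_norm p S R \<le> Lp_norm p S G"
proof -
  have le_powr: "AE x in lebesgue_on S. \<bar>R x\<bar> powr p \<le> \<bar>G x\<bar> powr p"
    using le by eventually_elim (use p in \<open>auto intro!: powr_mono2\<close>)
  have iG: "integrable (lebesgue_on S) (\<lambda>x. \<bar>G x\<bar> powr p)"
    using G by (simp add: Lp_def)
  have iR: "integrable (lebesgue_on S) (\<lambda>x. \<bar>R x\<bar> powr p)"
    by (rule Bochner_Integration.integrable_bound[OF iG]) (use R le_powr in auto)
  have "(\<integral>x. \<bar>R x\<bar> powr p \<partial>lebesgue_on S) \<le> (\<integral>x. \<bar>G x\<bar> powr p \<partial>lebesgue_on S)"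
    by (rule integral_mono_AE[OF iR iG le_powr])
  moreover have "(\<integral>x. \<bar>R x\<bar> powr p \<partial>lebesgue_on S) \<ge> 0"
    by (rule integral_nonneg_AE) simp
  ultimately show ?thesis
    unfolding Lp_norm_def using p by (intro powr_mono2) auto
qed

lemma Lp_mult: "Lp p S f \<Longrightarrow> Lp p S (\<lambda>x. c * f x)"
  unfolding Lp_def by (auto simp: abs_mult powr_mult)

lemma Lp_abs: "Lp p S f \<Longrightarrow> Lp p S (\<lambda>x. \<bar>f x\<bar>)"
  unfolding Lp_def by auto

lemma Lp_add:
  assumes p: "p > 0" and f: "Lp p S f" and g: "Lp p S g"
  shows "Lp p S (\<lambda>x. f x + g x)"
proof -
  have fm: "f \<in> borel_measurable (lebesgue_on S)" and gm: "g \<in> borel_measurable (lebesgue_on S)"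
    using f g by (auto simp: Lp_def)
  have bound: "\<bar>a + b\<bar> powr p \<le> 2 powr p * (\<bar>a\<bar> powr p + \<bar>b\<bar> powr p)" for a b :: real
  proof -
    have "\<bar>a + b\<bar> powr p \<le> (2 * max \<bar>a\<bar> \<bar>b\<bar>) powr p"
      using p by (intro powr_mono2) auto
    also have "\<dots> = 2 powr p * max \<bar>a\<bar> \<bar>b\<bar> powr p"
      by (simp add: powr_mult)
    also have "max \<bar>a\<bar> \<bar>b\<bar> powr p \<le> \<bar>a\<bar> powr p + \<bar>b\<bar> powr p"
      by (auto simp: max_def)
    finally show ?thesis by simp
  qed
  have "integrable (lebesgue_on S) (\<lambda>x. \<bar>f x + g x\<bar> powr p)"
  proof (rule Bochner_Integration.integrable_bound)
    show "integrable (lebesgue_on S) (\<lambda>x. 2 powr p * (\<bar>f x\<bar> powr p + \<bar>g x\<bar> powr p))"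
      using f g by (auto simp: Lp_def)
    show "AE x in lebesgue_on S. norm (\<bar>f x + g x\<bar> powr p) \<le> norm (2 powr p * (\<bar>f x\<bar> powr p + \<bar>g x\<bar> powr p))"
      using bound by (intro AE_I2) (simp add: abs_mult)
  qed (use fm gm in measurable)
  then show ?thesis
    using fm gm by (auto simp: Lp_def)
qed

lemma Lp_const:
  assumes "S \<in> sets lebesgue" "emeasure lebesgue S < \<infinity>"
  shows "Lp p S (\<lambda>x. c)"
proof -
  have "finite_measure (lebesgue_on S)"
    using assms by (intro finite_measureI) (simp add: emeasure_restrict_space)
  then show ?thesis
    unfolding Lp_def by (simp add: finite_measure.integrable_const)
qed

lemma integrable_mult_bounded:
  fixes h \<psi> :: "'a::euclidean_space \<Rightarrow> real"
  assumes \<psi>: "integrable (lebesgue_on \<Omega>) \<psi>" and h: "h \<in> borel_measurable (lebesgue_on \<Omega>)"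
    and bound: "\<forall>x\<in>\<Omega>. \<bar>h x\<bar> \<le> C"
  shows "integrable (lebesgue_on \<Omega>) (\<lambda>x. h x * \<psi> x)"
proof (rule Bochner_Integration.integrable_bound[OF integrable_mult_right[OF \<psi>, of C]])
  show "(\<lambda>x. h x * \<psi> x) \<in> borel_measurable (lebesgue_on \<Omega>)"
    using h \<psi> by measurable
  have "C \<ge> 0" if "x \<in> \<Omega>" for x
    using bound that by force
  then show "AE x in lebesgue_on \<Omega>. norm (h x * \<psi> x) \<le> norm (C * \<psi> x)"
    using bound by (intro AE_I2) (auto simp: abs_mult intro!: mult_right_mono)
qed

lemma integral_mult_pos:
  fixes \<phi> \<psi> :: "'a::euclidean_space \<Rightarrow> real"
  assumes \<Omega>: "open \<Omega>" "\<Omega> \<noteq> {}" and \<phi>: "\<forall>x\<in>\<Omega>. \<phi> x > 0" and \<psi>: "AE x in lebesgue_on \<Omega>. \<psi> x > 0"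
    and int: "integrable (lebesgue_on \<Omega>) (\<lambda>x. \<phi> x * \<psi> x)"
  shows "(\<integral>x. \<phi> x * \<psi> x \<partial>lebesgue_on \<Omega>) > 0"
proof -
  have pos: "AE x in lebesgue_on \<Omega>. 0 < \<phi> x * \<psi> x"
    using \<psi> AE_space by eventually_elim (use \<phi> in auto)
  then have "(\<integral>x. \<phi> x * \<psi> x \<partial>lebesgue_on \<Omega>) \<ge> 0"
    by (intro integral_nonneg_AE) (auto elim: AE_mp)
  moreover have "(\<integral>x. \<phi> x * \<psi> x \<partial>lebesgue_on \<Omega>) \<noteq> 0"
  proof
    assume "(\<integral>x. \<phi> x * \<psi> x \<partial>lebesgue_on \<Omega>) = 0"
    then have "AE x in lebesgue_on \<Omega>. \<phi> x * \<psi> x = 0"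
      using pos int by (subst integral_nonneg_eq_0_iff_AE[symmetric]) (auto elim: AE_mp)
    with pos have "AE x in lebesgue. x \<notin> \<Omega>"
      using \<Omega>(1) by (simp add: AE_restrict_space_iff) (auto elim: AE_mp)
    then have "\<Omega> \<in> null_sets lebesgue"
      using \<Omega>(1) by (auto simp: AE_iff_null_sets)
    then show False
      using open_not_negligible[OF \<Omega>] by (simp add: negligible_iff_null_sets)
  qed
  ultimately show ?thesis by simp
qed

section \<open>Weak derivatives\<close>

lemma is_wpd_unique:
  assumes \<Omega>: "open \<Omega>" and g: "is_wpd \<Omega> u i g" and g': "is_wpd \<Omega> u i g'"
  shows "AE x in lebesgue_on \<Omega>. g x = g' x"
proof -
  have "distrib_zero \<Omega> (\<lambda>x. g x - g' x)"
    unfolding distrib_zero_def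
  proof (intro allI impI conjI)
    fix \<phi> assume \<phi>: "test_fun \<Omega> \<phi>"
    have int: "integrable (lebesgue_on \<Omega>) (\<lambda>x. g x * \<phi> x)" "integrable (lebesgue_on \<Omega>) (\<lambda>x. g' x * \<phi> x)"
      and eq: "(\<integral>x. g x * \<phi> x \<partial>lebesgue_on \<Omega>) = (\<integral>x. g' x * \<phi> x \<partial>lebesgue_on \<Omega>)"
      using g g' \<phi> unfolding is_wpd_def by auto
    show "integrable (lebesgue_on \<Omega>) (\<lambda>x. (g x - g' x) * \<phi> x)"
      using int by (simp add: left_diff_distrib)
    show "(\<integral>x. (g x - g' x) * \<phi> x \<partial>lebesgue_on \<Omega>) = 0"
      using int eq by (simp add: left_diff_distrib)
  qed
  then have "AE x in lebesgue_on \<Omega>. g x - g' x = 0"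
    by (rule distrib_zero_AE_zero[OF \<Omega>])
  then show ?thesis
    by eventually_elim simp
qed

lemma is_wpd_cong_AE:
  assumes g: "is_wpd \<Omega> u i g" and ae: "AE x in lebesgue_on \<Omega>. u x = v x"
    and v: "\<And>\<phi>. test_fun \<Omega> \<phi> \<Longrightarrow> integrable (lebesgue_on \<Omega>) (\<lambda>x. v x * pdv \<phi> i x)"
  shows "is_wpd \<Omega> v i g"
  unfolding is_wpd_def
proof (intro allI impI conjI)
  fix \<phi> assume \<phi>: "test_fun \<Omega> \<phi>"
  show "integrable (lebesgue_on \<Omega>) (\<lambda>x. v x * pdv \<phi> i x)"
    using v \<phi> by blast
  show "integrable (lebesgue_on \<Omega>) (\<lambda>x. g x * \<phi> x)"
    using g \<phi> by (simp add: is_wpd_def)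
  have "(\<integral>x. v x * pdv \<phi> i x \<partial>lebesgue_on \<Omega>) = (\<integral>x. u x * pdv \<phi> i x \<partial>lebesgue_on \<Omega>)"
    using v[OF \<phi>] g \<phi> ae by (intro integral_cong_AE) (auto simp: is_wpd_def elim: AE_mp)
  then show "(\<integral>x. v x * pdv \<phi> i x \<partial>lebesgue_on \<Omega>) = - (\<integral>x. g x * \<phi> x \<partial>lebesgue_on \<Omega>)"
    using g \<phi> by (simp add: is_wpd_def)
qed

lemma wgh_unique:
  assumes \<Omega>: "open \<Omega>" and w: "wgh \<Omega> u g h" and w': "wgh \<Omega> u g' h'"
  shows "AE x in lebesgue_on \<Omega>. g i x = g' i x" "AE x in lebesgue_on \<Omega>. h i j x = h' i j x"
proof -
  show ae: "AE x in lebesgue_on \<Omega>. g i x = g' i x"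
    using w w' by (intro is_wpd_unique[OF \<Omega>]) (auto simp: wgh_def)
  have "is_wpd \<Omega> (g' i) j (h i j)"
    using w w' by (intro is_wpd_cong_AE[OF _ ae]) (auto simp: wgh_def is_wpd_def)
  then show "AE x in lebesgue_on \<Omega>. h i j x = h' i j x"
    using w' by (intro is_wpd_unique[OF \<Omega>]) (auto simp: wgh_def)
qed

lemma is_wpd_lin:
  assumes g: "is_wpd \<Omega> u i g" and g': "is_wpd \<Omega> v i g'"
  shows "is_wpd \<Omega> (\<lambda>x. \<alpha> * u x + \<beta> * v x) i (\<lambda>x. \<alpha> * g x + \<beta> * g' x)"
  unfolding is_wpd_def
proof (intro allI impI conjI)
  fix \<phi> assume \<phi>: "test_fun \<Omega> \<phi>"
  have int: "integrable (lebesgue_on \<Omega>) (\<lambda>x. u x * pdv \<phi> i x)" "integrable (lebesgue_on \<Omega>) (\<lambda>x. v x * pdv \<phi> i x)"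
      "integrable (lebesgue_on \<Omega>) (\<lambda>x. g x * \<phi> x)" "integrable (lebesgue_on \<Omega>) (\<lambda>x. g' x * \<phi> x)"
    and eq: "(\<integral>x. u x * pdv \<phi> i x \<partial>lebesgue_on \<Omega>) = - (\<integral>x. g x * \<phi> x \<partial>lebesgue_on \<Omega>)"
      "(\<integral>x. v x * pdv \<phi> i x \<partial>lebesgue_on \<Omega>) = - (\<integral>x. g' x * \<phi> x \<partial>lebesgue_on \<Omega>)"
    using g g' \<phi> by (auto simp: is_wpd_def)
  have lin: "(\<lambda>x. (\<alpha> * u x + \<beta> * v x) * pdv \<phi> i x) = (\<lambda>x. \<alpha> * (u x * pdv \<phi> i x) + \<beta> * (v x * pdv \<phi> i x))"
    "(\<lambda>x. (\<alpha> * g x + \<beta> * g' x) * \<phi> x) = (\<lambda>x. \<alpha> * (g x * \<phi> x) + \<beta> * (g' x * \<phi> x))"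
    by (auto simp: algebra_simps)
  show "integrable (lebesgue_on \<Omega>) (\<lambda>x. (\<alpha> * u x + \<beta> * v x) * pdv \<phi> i x)"
    "integrable (lebesgue_on \<Omega>) (\<lambda>x. (\<alpha> * g x + \<beta> * g' x) * \<phi> x)"
    unfolding lin using int by auto
  show "(\<integral>x. (\<alpha> * u x + \<beta> * v x) * pdv \<phi> i x \<partial>lebesgue_on \<Omega>)
      = - (\<integral>x. (\<alpha> * g x + \<beta> * g' x) * \<phi> x \<partial>lebesgue_on \<Omega>)"
    unfolding lin using int eq by simp
qed

lemma wgh_lin:
  assumes "wgh \<Omega> u g h" "wgh \<Omega> v g' h'"
  shows "wgh \<Omega> (\<lambda>x. \<alpha> * u x + \<beta> * v x) (\<lambda>i x. \<alpha> * g i x + \<beta> * g' i x)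
      (\<lambda>i j x. \<alpha> * h i j x + \<beta> * h' i j x)"
  using assms unfolding wgh_def by (auto intro: is_wpd_lin)

lemma wgh_wgrad_whess:
  assumes "wgh \<Omega> u g h"
  shows "wgh \<Omega> u (wgrad \<Omega> u) (whess \<Omega> u)"
  using someI[where P="\<lambda>gh. wgh \<Omega> u (fst gh) (snd gh)" and x="(g, h)"] assms
  by (simp add: wgrad_def whess_def)

lemma W2p_lin:
  assumes p: "p > 0" and u: "W2p p \<Omega> u" and v: "W2p p \<Omega> v"
  shows "W2p p \<Omega> (\<lambda>x. \<alpha> * u x + \<beta> * v x)"
proof -
  obtain g h where gh: "wgh \<Omega> u g h" "\<forall>i. Lp p \<Omega> (g i)" "\<forall>i j. Lp p \<Omega> (h i j)"
    using u by (auto simp: W2p_def)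
  obtain g' h' where gh': "wgh \<Omega> v g' h'" "\<forall>i. Lp p \<Omega> (g' i)" "\<forall>i j. Lp p \<Omega> (h' i j)"
    using v by (auto simp: W2p_def)
  show ?thesis
    unfolding W2p_def using wgh_lin[OF gh(1) gh'(1), of \<alpha> \<beta>] gh gh' u v
    by (intro conjI exI[of _ "\<lambda>i x. \<alpha> * g i x + \<beta> * g' i x"] exI[of _ "\<lambda>i j x. \<alpha> * h i j x + \<beta> * h' i j x"])
      (auto intro!: Lp_add[OF p] Lp_mult simp: W2p_def)
qed

lemma W2p_derivs_measurable:
  assumes \<Omega>: "open \<Omega>" and u: "W2p p \<Omega> u"
  shows "wgrad \<Omega> u i \<in> borel_measurable (lebesgue_on \<Omega>)"
    "whess \<Omega> u i j \<in> borel_measurable (lebesgue_on \<Omega>)"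
proof -
  obtain g h where gh: "wgh \<Omega> u g h" "\<forall>i. Lp p \<Omega> (g i)" "\<forall>i j. Lp p \<Omega> (h i j)"
    using u by (auto simp: W2p_def)
  note ae = wgh_unique[OF \<Omega> gh(1) wgh_wgrad_whess[OF gh(1)]]
  show "wgrad \<Omega> u i \<in> borel_measurable (lebesgue_on \<Omega>)"
    "whess \<Omega> u i j \<in> borel_measurable (lebesgue_on \<Omega>)"
    using \<Omega> gh(2,3) by (auto intro!: borel_measurable_lebesgue_on_AE[OF _ _ ae(1)]
        borel_measurable_lebesgue_on_AE[OF _ _ ae(2)] simp: Lp_def)
qed

lemma W2p_derivs_mult_AE:
  assumes \<Omega>: "open \<Omega>" and u: "W2p p \<Omega> u"
  shows "AE x in lebesgue_on \<Omega>. wgrad \<Omega> (\<lambda>x. c * u x) i x = c * wgrad \<Omega> u i x"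
    "AE x in lebesgue_on \<Omega>. whess \<Omega> (\<lambda>x. c * u x) i j x = c * whess \<Omega> u i j x"
proof -
  obtain g h where "wgh \<Omega> u g h"
    using u by (auto simp: W2p_def)
  then have w: "wgh \<Omega> u (wgrad \<Omega> u) (whess \<Omega> u)"
    by (rule wgh_wgrad_whess)
  have "wgh \<Omega> (\<lambda>x. c * u x) (\<lambda>i x. c * wgrad \<Omega> u i x) (\<lambda>i j x. c * whess \<Omega> u i j x)"
    using wgh_lin[OF w w, of c 0] by simp
  from wgh_unique[OF \<Omega> wgh_wgrad_whess[OF this] this]
  show "AE x in lebesgue_on \<Omega>. wgrad \<Omega> (\<lambda>x. c * u x) i x = c * wgrad \<Omega> u i x"
    "AE x in lebesgue_on \<Omega>. whess \<Omega> (\<lambda>x. c * u x) i j x = c * whess \<Omega> u i j x" .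
qed

lemma sob_norm_mult:
  assumes \<Omega>: "open \<Omega>" and p: "p > 0" and u: "W2p p \<Omega> u"
  shows "sob_norm p \<Omega> (\<lambda>x. c * u x) = \<bar>c\<bar> * sob_norm p \<Omega> u"
proof -
  have \<Omega>L: "\<Omega> \<in> sets lebesgue"
    using \<Omega> by simp
  have "Lp_norm p \<Omega> (wgrad \<Omega> (\<lambda>x. c * u x) i) = Lp_norm p \<Omega> (\<lambda>x. c * wgrad \<Omega> u i x)" for i
  proof (rule Lp_norm_cong_AE[OF \<Omega>L _ _, symmetric])
    show "(\<lambda>x. c * wgrad \<Omega> u i x) \<in> borel_measurable (lebesgue_on \<Omega>)"
      using W2p_derivs_measurable(1)[OF \<Omega> u] by measurable
    show "AE x in lebesgue_on \<Omega>. c * wgrad \<Omega> u i x = wgrad \<Omega> (\<lambda>x. c * u x) i x"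
      using W2p_derivs_mult_AE(1)[OF \<Omega> u, of c i] by eventually_elim simp
  qed
  moreover have "Lp_norm p \<Omega> (whess \<Omega> (\<lambda>x. c * u x) i j) = Lp_norm p \<Omega> (\<lambda>x. c * whess \<Omega> u i j x)" for i j
  proof (rule Lp_norm_cong_AE[OF \<Omega>L _ _, symmetric])
    show "(\<lambda>x. c * whess \<Omega> u i j x) \<in> borel_measurable (lebesgue_on \<Omega>)"
      using W2p_derivs_measurable(2)[OF \<Omega> u] by measurable
    show "AE x in lebesgue_on \<Omega>. c * whess \<Omega> u i j x = whess \<Omega> (\<lambda>x. c * u x) i j x"
      using W2p_derivs_mult_AE(2)[OF \<Omega> u, of c i j] by eventually_elim simp
  qed
  ultimately show ?thesis
    unfolding sob_norm_def by (simp add: Lp_norm_mult[OF p] sum_distrib_left distrib_left)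
qed

lemma sob_norm_nonneg: "sob_norm p \<Omega> u \<ge> 0"
  unfolding sob_norm_def by (intro add_nonneg_nonneg sum_nonneg Lp_norm_nonneg)

lemma sob_norm_divide_tendsto_0:
  assumes \<Omega>: "open \<Omega>" and p: "p > 0" and W: "\<And>t. W2p p \<Omega> (d t)"
    and bound: "\<And>t. sob_norm p \<Omega> (d t) \<le> C"
  shows "((\<lambda>t. sob_norm p \<Omega> (\<lambda>x. d t x / t)) \<longlongrightarrow> 0) at_infinity"
proof (rule Lim_null_comparison)
  show "\<forall>\<^sub>F t in at_infinity. norm (sob_norm p \<Omega> (\<lambda>x. d t x / t)) \<le> C * norm (inverse t)"
  proof (intro always_eventually allI)
    fix t :: real
    have "sob_norm p \<Omega> (\<lambda>x. d t x / t) = \<bar>inverse t\<bar> * sob_norm p \<Omega> (d t)"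
      using sob_norm_mult[OF \<Omega> p W, of "inverse t" t] by (simp add: divide_inverse mult.commute)
    also have "\<dots> \<le> \<bar>inverse t\<bar> * C"
      by (intro mult_left_mono bound) simp
    finally show "norm (sob_norm p \<Omega> (\<lambda>x. d t x / t)) \<le> C * norm (inverse t)"
      using sob_norm_nonneg[of p \<Omega> "\<lambda>x. d t x / t"] by (simp add: mult.commute)
  qed
  show "((\<lambda>t. C * norm (inverse t :: real)) \<longlongrightarrow> 0) at_infinity"
    by (intro tendsto_mult_right_zero tendsto_norm_zero tendsto_inverse_0)
qed

lemma Lop_mult_AE:
  assumes "open \<Omega>" "W2p p \<Omega> u"
  shows "AE x in lebesgue_on \<Omega>. Lop \<Omega> A b c (\<lambda>x. t * u x) x = t * Lop \<Omega> A b c u x"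
proof -
  have "AE x in lebesgue_on \<Omega>. (\<forall>i\<in>UNIV. wgrad \<Omega> (\<lambda>x. t * u x) i x = t * wgrad \<Omega> u i x)
      \<and> (\<forall>ij\<in>UNIV. whess \<Omega> (\<lambda>x. t * u x) (fst ij) (snd ij) x = t * whess \<Omega> u (fst ij) (snd ij) x)"
    using W2p_derivs_mult_AE[OF assms] by (intro AE_conjI AE_finite_allI) auto
  then show ?thesis
    by eventually_elim (simp add: Lop_def sum_distrib_left algebra_simps)
qed

lemma Xsp_mult:
  assumes p: "p > 0" and u: "Xsp p \<Omega> u"
  shows "Xsp p \<Omega> (\<lambda>x. t * u x)"
proof -
  have "W2p p \<Omega> (\<lambda>x. t * u x + 0 * u x)"
    using u by (intro W2p_lin[OF p]) (auto simp: Xsp_def)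
  moreover obtain v where "continuous_on (closure \<Omega>) v" "AE x in lebesgue_on \<Omega>. v x = u x"
      "\<forall>x\<in>frontier \<Omega>. v x = 0"
    using u by (auto simp: Xsp_def)
  ultimately show ?thesis
    unfolding Xsp_def
    by (intro conjI exI[of _ "\<lambda>x. t * v x"]) (auto intro: continuous_intros elim: AE_mp)
qed

section \<open>The splitting \<open>Y = Z \<oplus> \<real>\<phi>\<^sub>1\<close>\<close>

lemma coef_lin:
  assumes "integrable (lebesgue_on \<Omega>) (\<lambda>x. g x * \<psi> x)" "integrable (lebesgue_on \<Omega>) (\<lambda>x. h x * \<psi> x)"
  shows "coef \<Omega> \<phi>1 \<psi> (\<lambda>x. \<alpha> * g x + \<beta> * h x) = \<alpha> * coef \<Omega> \<phi>1 \<psi> g + \<beta> * coef \<Omega> \<phi>1 \<psi> h"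
proof -
  have "(\<lambda>x. (\<alpha> * g x + \<beta> * h x) * \<psi> x) = (\<lambda>x. \<alpha> * (g x * \<psi> x) + \<beta> * (h x * \<psi> x))"
    by (auto simp: algebra_simps)
  then show ?thesis
    using assms by (simp add: coef_def add_divide_distrib)
qed

lemma coef_cong_AE:
  assumes \<Omega>: "\<Omega> \<in> sets lebesgue" and g: "(\<lambda>x. g x * \<psi> x) \<in> borel_measurable (lebesgue_on \<Omega>)"
    and ae: "AE x in lebesgue_on \<Omega>. g x = h x"
  shows "coef \<Omega> \<phi>1 \<psi> h = coef \<Omega> \<phi>1 \<psi> g"
proof -
  have "AE x in lebesgue_on \<Omega>. g x * \<psi> x = h x * \<psi> x"
    using ae by eventually_elim simp
  moreover from borel_measurable_lebesgue_on_AE[OF \<Omega> g this]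
  have "(\<lambda>x. h x * \<psi> x) \<in> borel_measurable (lebesgue_on \<Omega>)" .
  ultimately show ?thesis
    using g unfolding coef_def by (subst integral_cong_AE) (auto elim: AE_mp)
qed

lemma abs_Pproj_le:
  fixes h \<psi> :: "real^'n \<Rightarrow> real"
  assumes \<psi>: "integrable (lebesgue_on \<Omega>) \<psi>" and h: "h \<in> borel_measurable (lebesgue_on \<Omega>)"
    and bound: "\<forall>x\<in>\<Omega>. \<bar>h x\<bar> \<le> C" and I: "(\<integral>x. \<phi>1 x * \<psi> x \<partial>lebesgue_on \<Omega>) > 0"
    and x: "x \<in> \<Omega>"
  shows "\<bar>Pproj \<Omega> \<phi>1 \<psi> h x\<bar>
    \<le> C + C * (\<integral>x. \<bar>\<psi> x\<bar> \<partial>lebesgue_on \<Omega>) / (\<integral>x. \<phi>1 x * \<psi> x \<partial>lebesgue_on \<Omega>) * \<bar>\<phi>1 x\<bar>"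
proof -
  have "\<bar>\<integral>x. h x * \<psi> x \<partial>lebesgue_on \<Omega>\<bar> \<le> (\<integral>x. \<bar>h x * \<psi> x\<bar> \<partial>lebesgue_on \<Omega>)"
    using integral_norm_bound[of "lebesgue_on \<Omega>" "\<lambda>x. h x * \<psi> x"] by simp
  also have "\<dots> \<le> (\<integral>x. C * \<bar>\<psi> x\<bar> \<partial>lebesgue_on \<Omega>)"
  proof (rule integral_mono)
    show "integrable (lebesgue_on \<Omega>) (\<lambda>x. \<bar>h x * \<psi> x\<bar>)"
      by (rule integrable_abs[OF integrable_mult_bounded[OF \<psi> h bound]])
    show "integrable (lebesgue_on \<Omega>) (\<lambda>x. C * \<bar>\<psi> x\<bar>)"
      using \<psi> by simp
    show "\<bar>h y * \<psi> y\<bar> \<le> C * \<bar>\<psi> y\<bar>" if "y \<in> space (lebesgue_on \<Omega>)" for y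
      using bound that by (simp add: abs_mult mult_right_mono)
  qed
  finally have "\<bar>coef \<Omega> \<phi>1 \<psi> h\<bar> \<le> C * (\<integral>x. \<bar>\<psi> x\<bar> \<partial>lebesgue_on \<Omega>) / (\<integral>x. \<phi>1 x * \<psi> x \<partial>lebesgue_on \<Omega>)"
    using I by (simp add: coef_def abs_divide divide_right_mono)
  then have "\<bar>coef \<Omega> \<phi>1 \<psi> h * \<phi>1 x\<bar>
      \<le> C * (\<integral>x. \<bar>\<psi> x\<bar> \<partial>lebesgue_on \<Omega>) / (\<integral>x. \<phi>1 x * \<psi> x \<partial>lebesgue_on \<Omega>) * \<bar>\<phi>1 x\<bar>"
    unfolding abs_mult by (rule mult_right_mono) simp_all
  moreover have "\<bar>Pproj \<Omega> \<phi>1 \<psi> h x\<bar> \<le> \<bar>h x\<bar> + \<bar>coef \<Omega> \<phi>1 \<psi> h * \<phi>1 x\<bar>"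
    unfolding Pproj_def by (rule abs_triangle_ineq4)
  ultimately show ?thesis
    using bound x by fastforce
qed

section \<open>The map \<open>\<Psi>\<close> along the eigenfunction\<close>

lemma AP_cond_mono: "AP_cond bb f \<Longrightarrow> mono f"
proof (rule monoI)
  fix x y :: real
  assume AP: "AP_cond bb f" and "x \<le> y"
  show "f x \<le> f y"
  proof (cases "x = y")
    case False
    with \<open>x \<le> y\<close> have "x - y < 0" by simp
    moreover have "0 \<le> (f x - f y) / (x - y)"
      using AP False by (simp add: AP_cond_def)
    ultimately show ?thesis
      by (simp add: zero_le_divide_iff)
  qed simp
qed

lemma AP_cond_ramp_deviation:
  assumes "AP_cond bb f"
  shows "\<exists>C\<ge>0. \<forall>s. \<bar>f s - bb * max s 0\<bar> \<le> C"
proof -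
  obtain M where M: "M \<ge> 0" "\<And>s. f s \<ge> max (bb * s - M) (- M)"
    using assms by (auto simp: AP_cond_def)
  have slope: "0 \<le> (f s - f 0) / s \<and> (f s - f 0) / s \<le> bb" if "s \<noteq> 0" for s
    using assms that unfolding AP_cond_def by (metis diff_zero)
  have "\<bar>f s - bb * max s 0\<bar> \<le> M + \<bar>f 0\<bar>" for s
  proof (cases "s > 0")
    case True
    then have "f s \<le> f 0 + bb * s"
      using slope[of s] by (simp add: divide_le_eq)
    then show ?thesis
      using True M(1) M(2)[of s] by (auto simp: abs_le_iff max_def split: if_splits)
  next
    case False
    then have "f s \<le> f 0"
      using assms[THEN AP_cond_mono] by (simp add: monoD)
    then show ?thesis
      using False M(1) M(2)[of s] by (auto simp: abs_le_iff max_def split: if_splits)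
  qed
  then show ?thesis
    using M(1) by (intro exI[of _ "M + \<bar>f 0\<bar>"]) auto
qed

lemma Psi_eigenfunction_mult_AE:
  assumes \<Omega>: "open \<Omega>" and \<phi>1: "W2p p \<Omega> \<phi>1"
    and eigen: "AE x in lebesgue_on \<Omega>. Lop \<Omega> A b c \<phi>1 x + lam1 * \<phi>1 x = 0"
    and int_\<phi>1: "integrable (lebesgue_on \<Omega>) (\<lambda>x. \<phi>1 x * \<psi> x)"
    and I: "(\<integral>x. \<phi>1 x * \<psi> x \<partial>lebesgue_on \<Omega>) \<noteq> 0"
    and int_h: "integrable (lebesgue_on \<Omega>) (\<lambda>x. (f (t * \<phi>1 x) - s * \<phi>1 x) * \<psi> x)"
  shows "AE x in lebesgue_on \<Omega>. Psi \<Omega> A b c \<phi>1 \<psi> f (\<lambda>x. t * \<phi>1 x) x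
    = t * \<phi>1 x - Pproj \<Omega> \<phi>1 \<psi> (\<lambda>x. f (t * \<phi>1 x) - s * \<phi>1 x) x"
proof -
  define h where "h x = f (t * \<phi>1 x) - s * \<phi>1 x" for x
  define F where "F x = (lam1 * t - s) * \<phi>1 x + (-1) * h x" for x
  have coef_\<phi>1: "coef \<Omega> \<phi>1 \<psi> (\<lambda>x. r * \<phi>1 x) = r" for r
    using I by (simp add: coef_def mult.assoc)
  have ae: "AE x in lebesgue_on \<Omega>. F x = Fop \<Omega> A b c f (\<lambda>x. t * \<phi>1 x) x"
    using Lop_mult_AE[OF \<Omega> \<phi>1, of A b c t] eigen
  proof eventually_elim
    case (elim x)
    then have "Lop \<Omega> A b c \<phi>1 x = - lam1 * \<phi>1 x"
      by linarith
    then show ?case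
      unfolding F_def h_def Fop_def elim(1) by (simp add: algebra_simps)
  qed
  have "integrable (lebesgue_on \<Omega>) (\<lambda>x. (lam1 * t - s) * (\<phi>1 x * \<psi> x) - h x * \<psi> x)"
    using int_\<phi>1 int_h by (simp add: h_def)
  moreover have "(\<lambda>x. (lam1 * t - s) * (\<phi>1 x * \<psi> x) - h x * \<psi> x) = (\<lambda>x. F x * \<psi> x)"
    by (auto simp: F_def algebra_simps)
  ultimately have "(\<lambda>x. F x * \<psi> x) \<in> borel_measurable (lebesgue_on \<Omega>)"
    by auto
  then have "coef \<Omega> \<phi>1 \<psi> (Fop \<Omega> A b c f (\<lambda>x. t * \<phi>1 x)) = coef \<Omega> \<phi>1 \<psi> F"
    using \<Omega> ae by (intro coef_cong_AE) auto
  also have "\<dots> = (lam1 * t - s) * coef \<Omega> \<phi>1 \<psi> \<phi>1 + (-1) * coef \<Omega> \<phi>1 \<psi> h"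
    unfolding F_def using int_\<phi>1 int_h by (intro coef_lin) (simp_all add: h_def)
  also have "\<dots> = lam1 * t - s - coef \<Omega> \<phi>1 \<psi> h"
    using coef_\<phi>1[of 1] by simp
  finally have coef_F: "coef \<Omega> \<phi>1 \<psi> (Fop \<Omega> A b c f (\<lambda>x. t * \<phi>1 x)) = lam1 * t - s - coef \<Omega> \<phi>1 \<psi> h" .
  have h: "(\<lambda>x. f (t * \<phi>1 x) - s * \<phi>1 x) = h"
    by (simp add: h_def fun_eq_iff)
  from ae show ?thesis
    unfolding h
  proof eventually_elim
    case (elim x)
    show ?case
      unfolding Psi_def Pproj_def coef_F coef_\<phi>1 elim[symmetric] by (simp add: F_def h_def algebra_simps)
  qed
qed

lemma Psi_eigenfunction_mult_near:
  assumes \<Omega>: "open \<Omega>" and \<phi>1: "W2p p \<Omega> \<phi>1" "\<forall>x\<in>\<Omega>. \<phi>1 x > 0"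
    and eigen: "AE x in lebesgue_on \<Omega>. Lop \<Omega> A b c \<phi>1 x + lam1 * \<phi>1 x = 0"
    and \<psi>: "integrable (lebesgue_on \<Omega>) \<psi>" "integrable (lebesgue_on \<Omega>) (\<lambda>x. \<phi>1 x * \<psi> x)"
    and I: "(\<integral>x. \<phi>1 x * \<psi> x \<partial>lebesgue_on \<Omega>) > 0"
    and f: "mono f" "\<forall>s. \<bar>f s - bb * max s 0\<bar> \<le> C"
  shows "AE x in lebesgue_on \<Omega>. \<bar>Psi \<Omega> A b c \<phi>1 \<psi> f (\<lambda>x. t * \<phi>1 x) x - t * \<phi>1 x\<bar>
    \<le> C + C * (\<integral>x. \<bar>\<psi> x\<bar> \<partial>lebesgue_on \<Omega>) / (\<integral>x. \<phi>1 x * \<psi> x \<partial>lebesgue_on \<Omega>) * \<bar>\<phi>1 x\<bar>"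
proof -
  define h where "h x = f (t * \<phi>1 x) - bb * max t 0 * \<phi>1 x" for x
  have h_bound: "\<forall>x\<in>\<Omega>. \<bar>h x\<bar> \<le> C"
  proof
    fix x assume "x \<in> \<Omega>"
    then have "max (t * \<phi>1 x) 0 = max t 0 * \<phi>1 x"
      using \<phi>1(2) by (auto simp: max_def mult_le_0_iff zero_le_mult_iff)
    then show "\<bar>h x\<bar> \<le> C"
      using f(2) by (metis h_def mult.assoc)
  qed
  have "\<phi>1 \<in> borel_measurable (lebesgue_on \<Omega>)"
    using \<phi>1(1) by (simp add: W2p_def Lp_def)
  then have h_measurable: "h \<in> borel_measurable (lebesgue_on \<Omega>)"
    using borel_measurable_mono[OF f(1)] unfolding h_def by measurable
  have "AE x in lebesgue_on \<Omega>. Psi \<Omega> A b c \<phi>1 \<psi> f (\<lambda>x. t * \<phi>1 x) x = t * \<phi>1 x - Pproj \<Omega> \<phi>1 \<psi> h x"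
    using Psi_eigenfunction_mult_AE[OF \<Omega> \<phi>1(1) eigen \<psi>(2), where t=t and s="bb * max t 0" and f=f] I
      integrable_mult_bounded[OF \<psi>(1) h_measurable h_bound]
    by (simp add: h_def[abs_def])
  then show ?thesis
    using AE_space
    by eventually_elim (use abs_Pproj_le[OF \<psi>(1) h_measurable h_bound I] in auto)
qed

lemma bilip_homeo_preimage_near_ray:
  assumes bil: "bilip_homeo p \<Omega> A b c \<phi>1 \<psi> f"
    and \<Omega>: "\<Omega> \<in> sets lebesgue" "emeasure lebesgue \<Omega> < \<infinity>" "open \<Omega>" and p: "p > 0"
    and \<phi>1: "Xsp p \<Omega> \<phi>1" "\<forall>x\<in>\<Omega>. \<phi>1 x > 0"
    and eigen: "AE x in lebesgue_on \<Omega>. Lop \<Omega> A b c \<phi>1 x + lam1 * \<phi>1 x = 0"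
    and \<psi>: "integrable (lebesgue_on \<Omega>) \<psi>" "integrable (lebesgue_on \<Omega>) (\<lambda>x. \<phi>1 x * \<psi> x)"
      "(\<integral>x. \<phi>1 x * \<psi> x \<partial>lebesgue_on \<Omega>) > 0"
    and f: "mono f" "\<forall>s. \<bar>f s - bb * max s 0\<bar> \<le> C"
    and z: "Lp p \<Omega> z"
  shows "\<exists>D. \<forall>t v. Xsp p \<Omega> v \<longrightarrow> (AE x in lebesgue_on \<Omega>. Psi \<Omega> A b c \<phi>1 \<psi> f v x = z x + t * \<phi>1 x)
    \<longrightarrow> sob_norm p \<Omega> (\<lambda>x. v x - t * \<phi>1 x) \<le> D"
proof -
  obtain K where K: "\<And>v w. Xsp p \<Omega> v \<Longrightarrow> Xsp p \<Omega> w \<Longrightarrow> sob_norm p \<Omega> (\<lambda>x. v x - w x)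
      \<le> K * Lp_norm p \<Omega> (\<lambda>x. Psi \<Omega> A b c \<phi>1 \<psi> f v x - Psi \<Omega> A b c \<phi>1 \<psi> f w x)" "K > 0"
    and Psi_Lp: "\<And>v. Xsp p \<Omega> v \<Longrightarrow> Lp p \<Omega> (Psi \<Omega> A b c \<phi>1 \<psi> f v)"
    using bil unfolding bilip_homeo_def by blast
  have W\<phi>1: "W2p p \<Omega> \<phi>1" and L\<phi>1: "Lp p \<Omega> \<phi>1"
    using \<phi>1(1) by (auto simp: Xsp_def W2p_def)
  define G where "G x = \<bar>z x\<bar> + (C + C * (\<integral>x. \<bar>\<psi> x\<bar> \<partial>lebesgue_on \<Omega>)
      / (\<integral>x. \<phi>1 x * \<psi> x \<partial>lebesgue_on \<Omega>) * \<bar>\<phi>1 x\<bar>)" for x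
  have G: "Lp p \<Omega> G"
    unfolding G_def by (intro Lp_add[OF p] Lp_abs z Lp_const[OF \<Omega>(1,2)] Lp_mult L\<phi>1)
  have "sob_norm p \<Omega> (\<lambda>x. v x - t * \<phi>1 x) \<le> K * Lp_norm p \<Omega> G"
    if v: "Xsp p \<Omega> v" "AE x in lebesgue_on \<Omega>. Psi \<Omega> A b c \<phi>1 \<psi> f v x = z x + t * \<phi>1 x" for t v
  proof -
    let ?dist = "\<lambda>x. Psi \<Omega> A b c \<phi>1 \<psi> f v x - Psi \<Omega> A b c \<phi>1 \<psi> f (\<lambda>x. t * \<phi>1 x) x"
    have "AE x in lebesgue_on \<Omega>. \<bar>?dist x\<bar> \<le> G x"
      using v(2) Psi_eigenfunction_mult_near[OF \<Omega>(3) W\<phi>1 \<phi>1(2) eigen \<psi> f, where t=t]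
      by eventually_elim (auto simp: G_def)
    moreover have "?dist \<in> borel_measurable (lebesgue_on \<Omega>)"
      using Psi_Lp[OF v(1)] Psi_Lp[OF Xsp_mult[OF p \<phi>1(1), of t]]
      unfolding Lp_def by (intro borel_measurable_diff) auto
    ultimately have "K * Lp_norm p \<Omega> ?dist \<le> K * Lp_norm p \<Omega> G"
      using K(2) Lp_norm_mono[OF p G] by (intro mult_left_mono) auto
    then show ?thesis
      using K(1)[OF v(1) Xsp_mult[OF p \<phi>1(1), of t]] by linarith
  qed
  then show ?thesis
    by blast
qed

theorem lemma2p14:
  fixes \<Omega> :: "(real^'n) set"
    and A :: "real^'n \<Rightarrow> real^'n^'n" and b :: "real^'n \<Rightarrow> real^'n" and c :: "real^'n \<Rightarrow> real"
    and p lmin lmax lam1 bb B :: real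
    and \<phi>1 \<psi> z :: "real^'n \<Rightarrow> real" and f :: "real \<Rightarrow> real"
    and u :: "real \<Rightarrow> real^'n \<Rightarrow> real"
  assumes dom: "open \<Omega>" "bounded \<Omega>" "connected \<Omega>" "\<Omega> \<noteq> {}" "C11_boundary \<Omega>"
    and p: "p \<ge> real CARD('n)"
    and ell: "0 < lmin" "lmin \<le> lmax"
      "continuous_on (closure \<Omega>) A"
      "\<forall>x\<in>closure \<Omega>. transpose (A x) = A x"
      "\<forall>x\<in>closure \<Omega>. \<forall>\<mu> v. v \<noteq> 0 \<and> A x *v v = \<mu> *\<^sub>R v \<longrightarrow> lmin \<le> \<mu> \<and> \<mu> \<le> lmax"
      "b \<in> borel_measurable lebesgue" "c \<in> borel_measurable lebesgue"
      "\<forall>x\<in>\<Omega>. norm (b x) \<le> lmax \<and> \<bar>c x\<bar> \<le> lmax"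
    and eig: "bdd_above (eig_set \<Omega> A b c)" "lam1 = Sup (eig_set \<Omega> A b c)"
      "Xsp p \<Omega> \<phi>1" "continuous_on (closure \<Omega>) \<phi>1" "\<forall>x\<in>\<Omega>. \<phi>1 x > 0"
      "AE x in lebesgue_on \<Omega>. Lop \<Omega> A b c \<phi>1 x + lam1 * \<phi>1 x = 0"
    and adj: "\<psi> \<in> borel_measurable (lebesgue_on \<Omega>)"
      "AE x in lebesgue_on \<Omega>. \<psi> x > 0"
      "\<forall>g. Lp p \<Omega> g \<longrightarrow> integrable (lebesgue_on \<Omega>) (\<lambda>x. g x * \<psi> x)"
      "\<forall>v. Xsp p \<Omega> v \<longrightarrow> (\<integral>x. (Lop \<Omega> A b c v x + lam1 * v x) * \<psi> x \<partial>lebesgue_on \<Omega>) = 0"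
    and lam_pos: "0 < lam1"
    and B: "lam1 < B"
      "\<forall>b'. lam1 < b' \<and> b' < B \<longrightarrow> (\<forall>g. AP_cond b' g \<longrightarrow> bilip_homeo p \<Omega> A b c \<phi>1 \<psi> g)"
    and f: "\<exists>K. \<forall>x y. \<bar>f x - f y\<bar> \<le> K * \<bar>x - y\<bar>" "convex_on UNIV f" "AP_cond bb f"
      "lam1 < bb" "bb < B"
    and z: "Lp p \<Omega> z" "(\<integral>x. z x * \<psi> x \<partial>lebesgue_on \<Omega>) = 0"
    and u: "\<forall>t. Xsp p \<Omega> (u t)
              \<and> (AE x in lebesgue_on \<Omega>. Psi \<Omega> A b c \<phi>1 \<psi> f (u t) x = z x + t * \<phi>1 x)"
  shows "((\<lambda>t. sob_norm p \<Omega> (\<lambda>x. (u t x - t * \<phi>1 x) / t)) \<longlongrightarrow> 0) at_infinity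
       \<and> ((\<lambda>t. sob_norm p \<Omega> (\<lambda>x. u t x / t - \<phi>1 x)) \<longlongrightarrow> 0) at_infinity"
proof -
  have \<Omega>: "\<Omega> \<in> sets lebesgue" "emeasure lebesgue \<Omega> < \<infinity>"
    using dom(1,2) emeasure_bounded_finite[OF dom(2)] by auto
  have "real CARD('n) > 0"
    by simp
  then have p0: "p > 0"
    using p by linarith
  have \<psi>: "integrable (lebesgue_on \<Omega>) \<psi>" "integrable (lebesgue_on \<Omega>) (\<lambda>x. \<phi>1 x * \<psi> x)"
    using adj(3) Lp_const[OF \<Omega>, of p 1] eig(3) by (auto simp: Xsp_def W2p_def)
  have I: "(\<integral>x. \<phi>1 x * \<psi> x \<partial>lebesgue_on \<Omega>) > 0"
    by (rule integral_mult_pos[OF dom(1,4) eig(5) adj(2) \<psi>(2)])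
  obtain C where C: "\<forall>s. \<bar>f s - bb * max s 0\<bar> \<le> C"
    using AP_cond_ramp_deviation[OF f(3)] by blast
  have "bilip_homeo p \<Omega> A b c \<phi>1 \<psi> f"
    using B(2) f(3-5) by blast
  from bilip_homeo_preimage_near_ray[OF this \<Omega> dom(1) p0 eig(3,5,6) \<psi> I AP_cond_mono[OF f(3)] C z(1)]
  obtain D where D: "\<And>t. sob_norm p \<Omega> (\<lambda>x. u t x - t * \<phi>1 x) \<le> D"
    using u by blast
  have "W2p p \<Omega> (\<lambda>x. u t x - t * \<phi>1 x)" for t
    using W2p_lin[OF p0, of \<Omega> "u t" \<phi>1 1 "- t"] u eig(3) by (simp add: Xsp_def)
  then have lim: "((\<lambda>t. sob_norm p \<Omega> (\<lambda>x. (u t x - t * \<phi>1 x) / t)) \<longlongrightarrow> 0) at_infinity"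
    by (rule sob_norm_divide_tendsto_0[OF dom(1) p0 _ D])
  have "\<forall>\<^sub>F t in at_infinity. (t :: real) \<noteq> 0"
    unfolding eventually_at_infinity by (intro exI[of _ 1]) auto
  then have eq: "\<forall>\<^sub>F t in at_infinity. sob_norm p \<Omega> (\<lambda>x. (u t x - t * \<phi>1 x) / t)
      = sob_norm p \<Omega> (\<lambda>x. u t x / t - \<phi>1 x)"
    by eventually_elim (simp add: diff_divide_distrib)
  then show ?thesis
    using lim Lim_transform_eventually[OF lim eq] by blast
qed

end
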